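(* Let $\rho,T>0$ and $\theta>0$, and for each $N\ge2$ let $\bm v,\bm w$ be as in the context. Then, as $N\uparrow\infty$, $$\theta\,\bm v^\top\bm v\to\frac{9(1+2e^{3\rho T})^2}{4\big(1-2e^{3\rho T}(5+3\rho T)\big)^2},\qquad \theta\,\bm w^\top\bm w\to\frac{1}{4(\rho T+1)^2}.$$
   Context: For $N\ge2$ let $\tilde\Gamma$ be the $(N+1)\times(N+1)$ lower triangular matrix with $\tilde\Gamma_{ij}=0$ for $i<j$, $\tilde\Gamma_{ii}=1/2$, $\tilde\Gamma_{ij}=e^{-\rho(i-j)T/N}$ for $i>j$; $\Gamma:=\tilde\Gamma+\tilde\Gamma^\top$; $\bm\nu:=(\Gamma+\tilde\Gamma+2\theta\mathrm{Id})^{-1}\mathbf1$, $\bm\omega:=(\Gamma-\tilde\Gamma+2\theta\mathrm{Id})^{-1}\mathbf1$ ($\mathbf1$ the all-ones vector), $\bm v:=\bm\nu/(\mathbf1^\top\bm\nu)$ and $\bm w:=\bm\omega/(\mathbf1^\top\bm\omega)$; all depend on $N$. *)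

theory Defs
  imports Complex_Main "Jordan_Normal_Form.Gauss_Jordan_Elimination"
begin

definition ones_vec :: "nat \<Rightarrow> real vec" where "ones_vec n = vec n (\<lambda>_. 1)"

definition Gamma_tilde :: "real \<Rightarrow> real \<Rightarrow> nat \<Rightarrow> real mat" where
  "Gamma_tilde \<rho> T N = mat (N+1) (N+1) (\<lambda>(i,j).
     if i < j then 0 else if i = j then 1/2
     else exp (- \<rho> * (real i - real j) * T / real N))"

definition Gamma_mat :: "real \<Rightarrow> real \<Rightarrow> nat \<Rightarrow> real mat" where
  "Gamma_mat \<rho> T N = Gamma_tilde \<rho> T N + transpose_mat (Gamma_tilde \<rho> T N)"

text \<open>Matrix inverse via the library's Gauss-Jordan inverse (the matrices are invertible).\<close>
definition minv :: "real mat \<Rightarrow> real mat" where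
  "minv A = the (mat_inverse A)"

definition nu_vec :: "real \<Rightarrow> real \<Rightarrow> real \<Rightarrow> nat \<Rightarrow> real vec" where
  "nu_vec \<rho> T \<theta> N = minv (Gamma_mat \<rho> T N + Gamma_tilde \<rho> T N + (2*\<theta>) \<cdot>\<^sub>m 1\<^sub>m (N+1)) *\<^sub>v ones_vec (N+1)"

definition omega_vec :: "real \<Rightarrow> real \<Rightarrow> real \<Rightarrow> nat \<Rightarrow> real vec" where
  "omega_vec \<rho> T \<theta> N = minv (Gamma_mat \<rho> T N - Gamma_tilde \<rho> T N + (2*\<theta>) \<cdot>\<^sub>m 1\<^sub>m (N+1)) *\<^sub>v ones_vec (N+1)"

definition v_vec :: "real \<Rightarrow> real \<Rightarrow> real \<Rightarrow> nat \<Rightarrow> real vec" where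
  "v_vec \<rho> T \<theta> N = (1 / (ones_vec (N+1) \<bullet> nu_vec \<rho> T \<theta> N)) \<cdot>\<^sub>v nu_vec \<rho> T \<theta> N"

definition w_vec :: "real \<Rightarrow> real \<Rightarrow> real \<Rightarrow> nat \<Rightarrow> real vec" where
  "w_vec \<rho> T \<theta> N = (1 / (ones_vec (N+1) \<bullet> omega_vec \<rho> T \<theta> N)) \<cdot>\<^sub>v omega_vec \<rho> T \<theta> N"

end

theory Submission
  imports Defs "Jordan_Normal_Form.Determinant" "HOL-Library.Quadratic_Discriminant"
    "HOL-Real_Asymp.Real_Asymp"
begin

text \<open>With \<open>a = exp (-\<rho>T/N)\<close> both matrices are Toeplitz in powers of \<open>a\<close>, so their systems
  with right-hand side \<open>1\<close> are solved exactly by combinations of geometric sequences. The matrix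
  of \<open>omega_vec\<close> is triangular and gives \<open>\<omega>\<^sub>j = P + Q r\<^sup>N\<^sup>-\<^sup>j\<close> with \<open>r \<rightarrow> (c-1)/c\<close>,
  \<open>c = 1/2 + 2\<theta>\<close>. For \<open>nu_vec\<close> one gets \<open>\<nu>\<^sub>j = \<alpha> + \<beta> z\<^sub>1\<^sup>j + \<gamma> z\<^sub>2\<^sup>j\<close>, where \<open>z\<^sub>1, z\<^sub>2\<close> are the
  zeros of the symbol \<open>2a/(z-a) + k + az/(1-az)\<close>, \<open>k = 3/2 + 2\<theta>\<close>, and \<open>\<beta>, \<gamma>\<close> are fixed by the first
  and last rows. As \<open>N \<rightarrow> \<infinity>\<close>, \<open>N(1-a) \<rightarrow> \<rho>T\<close>, \<open>N(z\<^sub>1-1) \<rightarrow> 3\<rho>T\<close> (so \<open>z\<^sub>1\<^sup>N \<rightarrow> e\<^sup>3\<^sup>\<rho>\<^sup>T\<close>) and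
  \<open>z\<^sub>2 \<rightarrow> (k-2)/(k-1) \<in> (-1,1)\<close>; the sums \<open>\<Sigma>\<nu>\<^sub>j\<close>, \<open>\<Sigma>\<nu>\<^sub>j\<^sup>2\<close>, \<open>\<Sigma>\<omega>\<^sub>j\<close>, \<open>\<Sigma>\<omega>\<^sub>j\<^sup>2\<close> are then
  geometric sums whose limits give the two constants.\<close>

section \<open>Exact solution of the Toeplitz systems\<close>

definition nu_system :: "real \<Rightarrow> real \<Rightarrow> nat \<Rightarrow> real mat" where
  "nu_system a k n = mat n n (\<lambda>(i, j). if j < i then 2 * a^(i-j) else if i = j then k else a^(j-i))"

definition omega_system :: "real \<Rightarrow> real \<Rightarrow> nat \<Rightarrow> real mat" where
  "omega_system a c n = mat n n (\<lambda>(i, j). if j < i then 0 else if i = j then c else a^(j-i))"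

lemma exp_scaled_diff_eq_power:
  assumes "j < i"
  shows "exp (- (\<rho> * (real i - real j) * T / real N)) = exp (- (\<rho> * T / real N)) ^ (i - j)"
proof -
  have "- (\<rho> * (real i - real j) * T / real N) = real (i - j) * (- (\<rho> * T / real N))"
    using assms by (simp add: of_nat_diff field_simps)
  then show ?thesis
    by (metis exp_of_nat_mult)
qed

lemma nu_matrix_eq_nu_system:
  "Gamma_mat \<rho> T N + Gamma_tilde \<rho> T N + (2*\<theta>) \<cdot>\<^sub>m 1\<^sub>m (N+1)
     = nu_system (exp (- \<rho> * T / real N)) (3/2 + 2*\<theta>) (N+1)"
  by (rule eq_matI)
    (auto simp: nu_system_def Gamma_mat_def Gamma_tilde_def exp_scaled_diff_eq_power)

lemma omega_matrix_eq_omega_system: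
  "Gamma_mat \<rho> T N - Gamma_tilde \<rho> T N + (2*\<theta>) \<cdot>\<^sub>m 1\<^sub>m (N+1)
     = omega_system (exp (- \<rho> * T / real N)) (1/2 + 2*\<theta>) (N+1)"
  by (rule eq_matI)
    (auto simp: omega_system_def Gamma_mat_def Gamma_tilde_def exp_scaled_diff_eq_power)

lemma sum_lessThan_split_at:
  fixes g :: "nat \<Rightarrow> 'a::comm_monoid_add"
  assumes "i < n"
  shows "(\<Sum>j<n. g j) = (\<Sum>j<i. g j) + g i + (\<Sum>j\<in>{i<..<n}. g j)"
proof -
  have "{..<n} = {..<i} \<union> {i} \<union> {i<..<n}"
    using assms by auto
  then have "(\<Sum>j<n. g j) = sum g ({..<i} \<union> {i} \<union> {i<..<n})"
    by simp
  also have "\<dots> = g i + sum g {..<i} + sum g {i<..<n}"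
    by (subst sum.union_disjoint) auto
  finally show ?thesis
    by (simp add: ac_simps)
qed

lemma nu_system_mult_vec_nth:
  assumes "i < n"
  shows "(nu_system a k n *\<^sub>v vec n f) $ i
           = 2 * (\<Sum>j<i. a^(i-j) * f j) + k * f i + (\<Sum>j\<in>{i<..<n}. a^(j-i) * f j)"
proof -
  have "(nu_system a k n *\<^sub>v vec n f) $ i
      = (\<Sum>j<n. (if j < i then 2 * a^(i-j) else if i = j then k else a^(j-i)) * f j)"
    using assms by (simp add: nu_system_def scalar_prod_def atLeast0LessThan)
  also have "\<dots> = 2 * (\<Sum>j<i. a^(i-j) * f j) + k * f i + (\<Sum>j\<in>{i<..<n}. a^(j-i) * f j)"
    by (subst sum_lessThan_split_at[OF assms]) (simp add: sum_distrib_left mult.assoc)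
  finally show ?thesis .
qed

lemma omega_system_mult_vec_nth:
  assumes "i < n"
  shows "(omega_system a c n *\<^sub>v vec n f) $ i = c * f i + (\<Sum>j\<in>{i<..<n}. a^(j-i) * f j)"
proof -
  have "(omega_system a c n *\<^sub>v vec n f) $ i
      = (\<Sum>j<n. (if j < i then 0 else if i = j then c else a^(j-i)) * f j)"
    using assms by (simp add: omega_system_def scalar_prod_def atLeast0LessThan)
  also have "\<dots> = c * f i + (\<Sum>j\<in>{i<..<n}. a^(j-i) * f j)"
    by (subst sum_lessThan_split_at[OF assms]) simp
  finally show ?thesis .
qed

lemma sum_greaterThanLessThan_shift:
  "(\<Sum>j\<in>{i<..<n}. f j) = (\<Sum>t<n - Suc i. f (Suc i + t))"
  by (rule sum.reindex_bij_witness[where j = "\<lambda>j. j - Suc i" and i = "\<lambda>t. Suc i + t"]) auto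

lemma geometric_sum_below:
  fixes a z :: "'a::comm_ring_1"
  shows "(z - a) * (\<Sum>j<i. a^(i-j) * z^j) = a * (z^i - a^i)"
proof -
  have "a^(i-j) = a * a^(i - Suc j)" if "j < i" for j
    using that by (metis Suc_diff_Suc power_Suc)
  then have "(\<Sum>j<i. a^(i-j) * z^j) = a * (\<Sum>j<i. a^(i - Suc j) * z^j)"
    by (simp add: sum_distrib_left mult.assoc)
  then show ?thesis
    by (simp add: power_diff_sumr2 algebra_simps)
qed

lemma geometric_sum_above:
  fixes a z :: "'a::comm_ring_1"
  assumes "i < n"
  shows "(1 - a*z) * (\<Sum>j\<in>{i<..<n}. a^(j-i) * z^j) = a*z*z^i - a^(n-i) * z^n"
proof -
  define m where "m = n - Suc i"
  have n: "n = Suc i + m" "n - i = Suc m"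
    using assms by (simp_all add: m_def)
  have "(\<Sum>j\<in>{i<..<n}. a^(j-i) * z^j) = a*z*z^i * (\<Sum>t<m. (a*z)^t)"
    by (simp add: sum_greaterThanLessThan_shift m_def sum_distrib_left power_add
        power_mult_distrib algebra_simps)
  then have "(1 - a*z) * (\<Sum>j\<in>{i<..<n}. a^(j-i) * z^j)
      = a*z*z^i * ((1 - a*z) * (\<Sum>t<m. (a*z)^t))"
    by (simp add: ac_simps)
  also have "\<dots> = a*z*z^i * (1 - (a*z)^m)"
    by (simp only: one_diff_power_eq)
  also have "\<dots> = a*z*z^i - a^(n-i) * z^n"
    by (simp add: n power_add power_mult_distrib algebra_simps)
  finally show ?thesis .
qed

lemma mixed_geometric_sum_above:
  fixes a r :: "'a::comm_ring_1"
  assumes "i < n"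
  shows "(a - r) * (\<Sum>j\<in>{i<..<n}. a^(j-i) * r^(n-1-j)) = a * (a^(n-1-i) - r^(n-1-i))"
proof -
  define m where "m = n - Suc i"
  have "(\<Sum>j\<in>{i<..<n}. a^(j-i) * r^(n-1-j)) = a * (\<Sum>t<m. r^(m - Suc t) * a^t)"
    using assms by (auto simp: sum_greaterThanLessThan_shift m_def sum_distrib_left
        intro!: sum.cong)
  then show ?thesis
    using assms by (simp add: power_diff_sumr2 m_def algebra_simps)
qed

lemma omega_system_solution:
  fixes a c :: real
  assumes a: "0 < a" "a < 1" and c: "c > 0" and i: "i < n"
  defines "P \<equiv> (1-a) / (c*(1-a) + a)" and "Q \<equiv> a / (c * (c*(1-a) + a))"
    and "r \<equiv> a * (c-1) / c"
  shows "(omega_system a c n *\<^sub>v vec n (\<lambda>j. P + Q * r^(n-1-j))) $ i = 1"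
proof -
  define m where "m = n - 1 - i"
  have D: "c*(1-a) + a > 0"
    using a c by (simp add: add_pos_nonneg)
  have "n - i = Suc m"
    using i by (simp add: m_def)
  then have "(1 - a) * (\<Sum>j\<in>{i<..<n}. a^(j-i)) = a - a * a^m"
    using geometric_sum_above[OF i, of a 1] by simp
  then have geo: "(\<Sum>j\<in>{i<..<n}. a^(j-i)) = (a - a * a^m) / (1 - a)"
    using a by (simp add: field_simps)
  have "a - r = a / c"
    using c by (simp add: r_def field_simps)
  then have "a / c * (\<Sum>j\<in>{i<..<n}. a^(j-i) * r^(n-1-j)) = a * (a^m - r^m)"
    using mixed_geometric_sum_above[OF i, of a r] by (simp add: m_def)
  then have mixed: "(\<Sum>j\<in>{i<..<n}. a^(j-i) * r^(n-1-j)) = c * (a^m - r^m)"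
    using a c by (simp add: divide_simps)
  have "(omega_system a c n *\<^sub>v vec n (\<lambda>j. P + Q * r^(n-1-j))) $ i
      = c * (P + Q * r^m) + P * (\<Sum>j\<in>{i<..<n}. a^(j-i)) + Q * (\<Sum>j\<in>{i<..<n}. a^(j-i) * r^(n-1-j))"
    by (simp add: omega_system_mult_vec_nth[OF i] m_def sum.distrib sum_distrib_left algebra_simps)
  also have "\<dots> = 1"
    unfolding geo mixed P_def Q_def using a c D by (simp add: divide_simps) (simp add: algebra_simps)
  finally show ?thesis .
qed

definition nu_symbol :: "real \<Rightarrow> real \<Rightarrow> real \<Rightarrow> real" where
  "nu_symbol a k z = 2*a / (z - a) + k + a*z / (1 - a*z)"

lemma nu_system_row_power:
  fixes a k z :: real
  assumes "z \<noteq> a" "a*z \<noteq> 1" "i < n"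
  shows "2 * (\<Sum>j<i. a^(i-j) * z^j) + k * z^i + (\<Sum>j\<in>{i<..<n}. a^(j-i) * z^j)
       = z^i * nu_symbol a k z - 2 * a^Suc i / (z - a) - a^(n-i) * z^n / (1 - a*z)"
proof -
  have nz: "z - a \<noteq> 0" "1 - a*z \<noteq> 0"
    using assms by auto
  have below: "(\<Sum>j<i. a^(i-j) * z^j) = a * (z^i - a^i) / (z - a)"
    using geometric_sum_below[of z a i] nz by (simp add: field_simps)
  have above: "(\<Sum>j\<in>{i<..<n}. a^(j-i) * z^j) = (a*z*z^i - a^(n-i) * z^n) / (1 - a*z)"
    using geometric_sum_above[OF assms(3), of a z] nz by (simp add: field_simps)
  show ?thesis
    unfolding below above nu_symbol_def
    by (simp add: add_divide_distrib diff_divide_distrib algebra_simps)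
qed

lemma nu_symbol_root:
  fixes a k z :: real
  assumes "z \<noteq> a" "a*z \<noteq> 1" and root: "a*(1-k) * z^2 + (k*(1 + a^2) - 3*a^2) * z + a*(2-k) = 0"
  shows "nu_symbol a k z = 0"
proof -
  have "z - a \<noteq> 0" "1 - a*z \<noteq> 0"
    using assms by auto
  then have "nu_symbol a k z * ((z - a) * (1 - a*z))
      = a*(1-k) * z^2 + (k*(1 + a^2) - 3*a^2) * z + a*(2-k)"
    by (simp add: nu_symbol_def divide_simps) (simp add: power2_eq_square algebra_simps)
  then show ?thesis
    using root \<open>z - a \<noteq> 0\<close> \<open>1 - a*z \<noteq> 0\<close> by simp
qed

lemma nu_system_solution:
  fixes a k z1 z2 s \<beta> \<gamma> :: real
  assumes roots: "z1 \<noteq> a" "z2 \<noteq> a" "a*z1 \<noteq> 1" "a*z2 \<noteq> 1"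
      "nu_symbol a k z1 = 0" "nu_symbol a k z2 = 0"
    and a: "a \<noteq> 1" and i: "i < n"
    and s: "s * (3*a + k*(1-a)) = 1"
    and head: "s + \<beta> / (z1 - a) + \<gamma> / (z2 - a) = 0"
    and tail: "s + \<beta> * z1^n / (1 - a*z1) + \<gamma> * z2^n / (1 - a*z2) = 0"
  shows "(nu_system a k n *\<^sub>v vec n (\<lambda>j. s*(1-a) + \<beta> * z1^j + \<gamma> * z2^j)) $ i = 1"
proof -
  define R where "R z = 2 * (\<Sum>j<i. a^(i-j) * z^j) + k * z^i + (\<Sum>j\<in>{i<..<n}. a^(j-i) * z^j)"
    for z
  have a': "1 - a \<noteq> 0"
    using a by simp
  have symbol1: "(1-a) * nu_symbol a k 1 = 3*a + k*(1-a)"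
    using a' by (simp add: nu_symbol_def divide_simps)
  have "R 1 = nu_symbol a k 1 - 2 * a^Suc i / (1 - a) - a^(n-i) / (1 - a)"
    using nu_system_row_power[of 1 a i n k] a i by (simp add: R_def)
  then have "(1-a) * R 1 = 3*a + k*(1-a) - 2 * a^Suc i - a^(n-i)"
    using a' by (simp add: right_diff_distrib symbol1)
  then have "s*(1-a) * R 1 = s * (3*a + k*(1-a)) - 2 * a^Suc i * s - a^(n-i) * s"
    by (simp only: mult.assoc) (simp add: algebra_simps)
  then have R1: "s*(1-a) * R 1 = 1 - 2 * a^Suc i * s - a^(n-i) * s"
    by (simp only: s)
  have Rz1: "R z1 = - 2 * a^Suc i / (z1 - a) - a^(n-i) * z1^n / (1 - a*z1)"
    using nu_system_row_power[of z1 a i n k] roots i by (simp add: R_def)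
  have Rz2: "R z2 = - 2 * a^Suc i / (z2 - a) - a^(n-i) * z2^n / (1 - a*z2)"
    using nu_system_row_power[of z2 a i n k] roots i by (simp add: R_def)
  define \<alpha> where "\<alpha> = s*(1-a)"
  have "(nu_system a k n *\<^sub>v vec n (\<lambda>j. \<alpha> + \<beta> * z1^j + \<gamma> * z2^j)) $ i
      = \<alpha> * R 1 + \<beta> * R z1 + \<gamma> * R z2"
    by (simp add: nu_system_mult_vec_nth[OF i] R_def sum.distrib sum_distrib_left algebra_simps)
  also have "\<dots> = 1 - 2 * a^Suc i * (s + \<beta> / (z1 - a) + \<gamma> / (z2 - a))
      - a^(n-i) * (s + \<beta> * z1^n / (1 - a*z1) + \<gamma> * z2^n / (1 - a*z2))"
    unfolding \<alpha>_def R1 Rz1 Rz2 by (simp add: algebra_simps)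
  finally show ?thesis
    unfolding head tail \<alpha>_def by simp
qed

lemma cramer_solution:
  fixes p1 q1 p2 q2 s :: real
  assumes "p1 * q2 - p2 * q1 \<noteq> 0"
  defines "x \<equiv> - s * (q2 - p2) / (p1 * q2 - p2 * q1)" and "y \<equiv> - s * (p1 - q1) / (p1 * q2 - p2 * q1)"
  shows "s + x * p1 + y * p2 = 0" and "s + x * q1 + y * q2 = 0"
  using assms by (simp_all add: divide_simps) (simp_all add: algebra_simps)

lemma normalized_dot_self:
  fixes g :: "nat \<Rightarrow> real"
  shows "((1 / (ones_vec n \<bullet> vec n g)) \<cdot>\<^sub>v vec n g) \<bullet> ((1 / (ones_vec n \<bullet> vec n g)) \<cdot>\<^sub>v vec n g)
           = (\<Sum>j<n. (g j)^2) / (\<Sum>j<n. g j)^2"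
proof -
  have "ones_vec n \<bullet> vec n g = (\<Sum>j<n. g j)"
    by (simp add: ones_vec_def scalar_prod_def atLeast0LessThan)
  moreover have "vec n g \<bullet> vec n g = (\<Sum>j<n. (g j)^2)"
    by (simp add: scalar_prod_def atLeast0LessThan power2_eq_square)
  ultimately show ?thesis
    by (simp add: smult_scalar_prod_distrib scalar_prod_smult_distrib power2_eq_square)
qed

lemma sum_three_powers:
  fixes \<alpha> \<beta> \<gamma> x y :: "'a::comm_semiring_1"
  shows "(\<Sum>j<n. \<alpha> + \<beta> * x^j + \<gamma> * y^j) = of_nat n * \<alpha> + \<beta> * (\<Sum>j<n. x^j) + \<gamma> * (\<Sum>j<n. y^j)"
  by (simp add: sum.distrib sum_distrib_left)

lemma sum_three_powers_squared:
  fixes \<alpha> \<beta> \<gamma> x y :: "'a::comm_semiring_1"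
  shows "(\<Sum>j<n. (\<alpha> + \<beta> * x^j + \<gamma> * y^j)^2)
           = of_nat n * \<alpha>^2 + \<beta>^2 * (\<Sum>j<n. (x^2)^j) + \<gamma>^2 * (\<Sum>j<n. (y^2)^j)
             + 2*\<alpha>*\<beta> * (\<Sum>j<n. x^j) + 2*\<alpha>*\<gamma> * (\<Sum>j<n. y^j) + 2*\<beta>*\<gamma> * (\<Sum>j<n. (x*y)^j)"
proof -
  have "(\<alpha> + \<beta> * x^j + \<gamma> * y^j)^2 = \<alpha>^2 + \<beta>^2 * (x^2)^j + \<gamma>^2 * (y^2)^j
      + 2*\<alpha>*\<beta> * x^j + 2*\<alpha>*\<gamma> * y^j + 2*\<beta>*\<gamma> * (x*y)^j" for j
    by (simp add: power2_eq_square power_mult_distrib algebra_simps mult_2)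
  then show ?thesis
    by (simp add: sum.distrib sum_distrib_left)
qed

lemma sum_reversed_powers:
  fixes P Q r :: "'a::comm_semiring_1"
  shows "(\<Sum>j<Suc N. P + Q * r^(N-j)) = of_nat (Suc N) * P + Q * (\<Sum>j<Suc N. r^j)"
    and "(\<Sum>j<Suc N. (P + Q * r^(N-j))^2)
           = of_nat (Suc N) * P^2 + Q^2 * (\<Sum>j<Suc N. (r^2)^j) + 2*P*Q * (\<Sum>j<Suc N. r^j)"
proof -
  have reverse: "(\<Sum>j<Suc N. f (N - j)) = (\<Sum>j<Suc N. f j)" for f :: "nat \<Rightarrow> 'a"
    using sum.nat_diff_reindex[of f "Suc N"] by simp
  show "(\<Sum>j<Suc N. P + Q * r^(N-j)) = of_nat (Suc N) * P + Q * (\<Sum>j<Suc N. r^j)"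
    using reverse[of "\<lambda>j. P + Q * r^j"] sum_three_powers[of P Q r 0 0 "Suc N"]
    by (simp del: sum.lessThan_Suc)
  show "(\<Sum>j<Suc N. (P + Q * r^(N-j))^2)
      = of_nat (Suc N) * P^2 + Q^2 * (\<Sum>j<Suc N. (r^2)^j) + 2*P*Q * (\<Sum>j<Suc N. r^j)"
    using reverse[of "\<lambda>j. (P + Q * r^j)^2"] sum_three_powers_squared[of P Q r 0 0 "Suc N"]
    by (simp del: sum.lessThan_Suc)
qed

section \<open>Invertibility\<close>

lemma minv_mult_vec_ones:
  fixes A :: "real mat"
  assumes A: "A \<in> carrier_mat n n" and "det A \<noteq> 0"
    and x: "x \<in> carrier_vec n" and Ax: "A *\<^sub>v x = ones_vec n"
  shows "minv A *\<^sub>v ones_vec n = x"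
proof -
  have "A \<in> Units (ring_mat TYPE(real) n ())"
    using det_non_zero_imp_unit[OF A \<open>det A \<noteq> 0\<close>] .
  then obtain B where B: "mat_inverse A = Some B"
    using mat_inverse(1)[OF A, of "()"] by blast
  then have BA: "B * A = 1\<^sub>m n" and B': "B \<in> carrier_mat n n"
    using mat_inverse(2)[OF A B] by auto
  have "minv A *\<^sub>v ones_vec n = B *\<^sub>v (A *\<^sub>v x)"
    using Ax B by (simp add: minv_def)
  also have "\<dots> = (B * A) *\<^sub>v x"
    using A B' x by simp
  finally show ?thesis
    using BA x by simp
qed

lemma det_omega_system:
  "det (omega_system a c n) = c^n"
proof -
  have "upper_triangular (omega_system a c n)"
    by (auto simp: upper_triangular_def omega_system_def)
  then have "det (omega_system a c n) = prod_list (diag_mat (omega_system a c n))"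
    by (rule det_upper_triangular[of _ n]) (simp add: omega_system_def)
  also have "diag_mat (omega_system a c n) = map (\<lambda>i. c) [0..<n]"
    by (auto simp: diag_mat_def omega_system_def)
  finally show ?thesis
    by (simp add: map_replicate_const)
qed

lemma sum_lessThan_nested_swap:
  fixes f :: "nat \<Rightarrow> nat \<Rightarrow> 'a::comm_monoid_add"
  shows "(\<Sum>i<n. \<Sum>j<i. f i j) = (\<Sum>j<n. \<Sum>i\<in>{j<..<n}. f i j)"
proof (induction n)
  case (Suc n)
  have "{j<..<Suc n} = insert n {j<..<n}" if "j < n" for j
    using that by auto
  moreover have "{n<..<Suc n} = {}"
    by auto
  ultimately show ?case
    by (simp add: Suc sum.distrib add_ac)
qed simp

lemma lower_toeplitz_form_eq:
  fixes a :: real and x :: "nat \<Rightarrow> real"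
  defines "y \<equiv> \<lambda>m. \<Sum>j<Suc m. a^(m-j) * x j"
  shows "(\<Sum>i<Suc m. x i * ((\<Sum>j<i. a^(i-j) * x j) + x i / 2))
           = (y m)^2 / 2 + (1 - a^2) / 2 * (\<Sum>i<m. (y i)^2)"
proof (induction m)
  case 0
  then show ?case
    by (simp add: y_def power2_eq_square)
next
  case (Suc m)
  have lower: "(\<Sum>j<Suc m. a^(Suc m - j) * x j) = a * y m"
    by (simp add: y_def sum_distrib_left Suc_diff_le mult.assoc del: sum.lessThan_Suc)
  then have "y (Suc m) = a * y m + x (Suc m)"
    by (simp add: y_def)
  then show ?case
    using Suc.IH lower by (simp add: power2_eq_square field_simps)
qed

lemma lower_toeplitz_form_nonneg:
  fixes a :: real and x :: "nat \<Rightarrow> real"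
  assumes "\<bar>a\<bar> \<le> 1"
  shows "(\<Sum>i<n. x i * ((\<Sum>j<i. a^(i-j) * x j) + x i / 2)) \<ge> 0"
proof (cases n)
  case (Suc m)
  have "a^2 \<le> 1"
    using power_mono[OF assms, of 2] by simp
  then have "(1 - a^2) / 2 * (\<Sum>i<m. (\<Sum>j<Suc i. a^(i-j) * x j)^2) \<ge> 0"
    by (intro mult_nonneg_nonneg sum_nonneg) auto
  then show ?thesis
    unfolding Suc lower_toeplitz_form_eq by simp
qed simp

text \<open>The quadratic form of \<open>nu_system a k n\<close> is three times the nonnegative lower form plus
  \<open>(k - 3/2) |x|\<^sup>2\<close>.\<close>
lemma det_nu_system_nonzero:
  fixes a k :: real
  assumes a: "\<bar>a\<bar> \<le> 1" and k: "k > 3/2"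
  shows "det (nu_system a k n) \<noteq> 0"
proof
  assume "det (nu_system a k n) = 0"
  then obtain v where v: "v \<in> carrier_vec n" "v \<noteq> 0\<^sub>v n" "nu_system a k n *\<^sub>v v = 0\<^sub>v n"
    using det_0_iff_vec_prod_zero_field[of "nu_system a k n" n] by (auto simp: nu_system_def)
  define x where "x i = v $ i" for i
  have v_eq: "v = vec n x"
    using v(1) by (auto simp: x_def)
  define F where "F i = (\<Sum>j<i. a^(i-j) * x j)" for i
  have upper: "(\<Sum>i<n. x i * (\<Sum>j\<in>{i<..<n}. a^(j-i) * x j)) = (\<Sum>i<n. x i * F i)"
    by (simp add: F_def sum_distrib_left sum_lessThan_nested_swap ac_simps)
  have "0 = (\<Sum>i<n. x i * (nu_system a k n *\<^sub>v v) $ i)"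
    using v(3) by simp
  also have "\<dots> = (\<Sum>i<n. x i * (2 * F i + k * x i + (\<Sum>j\<in>{i<..<n}. a^(j-i) * x j)))"
    by (simp add: v_eq nu_system_mult_vec_nth F_def)
  also have "\<dots> = 2 * (\<Sum>i<n. x i * F i) + k * (\<Sum>i<n. x i * x i)
      + (\<Sum>i<n. x i * (\<Sum>j\<in>{i<..<n}. a^(j-i) * x j))"
    by (simp add: sum.distrib sum_distrib_left algebra_simps)
  also have "\<dots> = 3 * ((\<Sum>i<n. x i * F i) + (\<Sum>i<n. x i * x i) / 2)
      + (k - 3/2) * (\<Sum>i<n. x i * x i)"
    unfolding upper by (simp add: algebra_simps)
  also have "(\<Sum>i<n. x i * F i) + (\<Sum>i<n. x i * x i) / 2 = (\<Sum>i<n. x i * (F i + x i / 2))"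
    by (simp add: sum.distrib sum_divide_distrib algebra_simps)
  finally have "(k - 3/2) * (\<Sum>i<n. x i * x i) \<le> 0"
    using lower_toeplitz_form_nonneg[OF a, of x n] unfolding F_def by linarith
  then have "(\<Sum>i<n. x i * x i) \<le> 0"
    using k by (simp add: mult_le_0_iff)
  moreover have "(\<Sum>i<n. x i * x i) \<ge> 0"
    by (intro sum_nonneg) simp
  ultimately have "(\<Sum>i<n. x i * x i) = 0"
    by linarith
  then have "\<forall>i<n. x i = 0"
    by (simp add: sum_nonneg_eq_0_iff)
  then have "v = 0\<^sub>v n"
    by (simp add: v_eq vec_eq_iff)
  with v(2) show False ..
qed

section \<open>Limits of geometric expressions\<close>

lemma tendsto_power_Suc_zero:
  fixes f :: "nat \<Rightarrow> real"
  assumes f: "f \<longlonglongrightarrow> L" and L: "\<bar>L\<bar> < 1"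
  shows "(\<lambda>N. f N ^ Suc N) \<longlonglongrightarrow> 0"
proof -
  define q where "q = (1 + \<bar>L\<bar>) / 2"
  have q: "\<bar>L\<bar> < q" "q < 1" "0 \<le> q"
    using L by (auto simp: q_def)
  have "eventually (\<lambda>N. \<bar>f N\<bar> < q) sequentially"
    using tendsto_rabs[OF f] q(1) by (rule order_tendstoD)
  then have bound: "eventually (\<lambda>N. norm (f N ^ Suc N) \<le> norm (q ^ Suc N) * 1) sequentially"
  proof eventually_elim
    case (elim N)
    then have "\<bar>f N\<bar> ^ Suc N \<le> q ^ Suc N"
      by (intro power_mono) auto
    then show ?case
      using q(3) by (simp add: power_abs del: power_Suc)
  qed
  have "(\<lambda>N. q ^ Suc N) \<longlonglongrightarrow> 0"
    using LIMSEQ_Suc[OF LIMSEQ_power_zero[of q]] q by simp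
  then show ?thesis
    using bound by (rule tendsto_0_le)
qed

lemma geometric_sum_tendsto:
  fixes q :: "nat \<Rightarrow> real"
  assumes q: "q \<longlonglongrightarrow> Z" and Z: "\<bar>Z\<bar> < 1"
  shows "(\<lambda>N. \<Sum>j<Suc N. q N ^ j) \<longlonglongrightarrow> 1 / (1 - Z)"
proof -
  have "Z \<noteq> 1"
    using Z by auto
  then have "(\<lambda>N. (1 - q N ^ Suc N) / (1 - q N)) \<longlonglongrightarrow> (1 - 0) / (1 - Z)"
    by (intro tendsto_divide tendsto_diff tendsto_const q tendsto_power_Suc_zero[OF q Z]) simp
  moreover have "eventually (\<lambda>N. q N \<noteq> 1) sequentially"
    using tendsto_imp_eventually_ne[OF q \<open>Z \<noteq> 1\<close>] .
  then have "eventually (\<lambda>N. (1 - q N ^ Suc N) / (1 - q N) = (\<Sum>j<Suc N. q N ^ j)) sequentially"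
    by eventually_elim (simp add: sum_gp_strict del: sum.lessThan_Suc power_Suc)
  ultimately show ?thesis
    by (simp add: Lim_transform_eventually)
qed

text \<open>A discrete form of \<open>(1 + L/n)\<^sup>n \<rightarrow> e\<^sup>L\<close>; the error \<open>\<bar>ln (1+d) - d\<bar> \<le> 2d\<^sup>2\<close> is
  negligible after multiplication by \<open>n\<close>, because \<open>n d\<close> stays bounded.\<close>
lemma power_tendsto_exp:
  fixes d :: "nat \<Rightarrow> real"
  assumes nd: "(\<lambda>N. real (Suc N) * d N) \<longlonglongrightarrow> L"
  shows "(\<lambda>N. (1 + d N) ^ Suc N) \<longlonglongrightarrow> exp L"
proof -
  have "(\<lambda>N. inverse (real (Suc N)) * (real (Suc N) * d N)) \<longlonglongrightarrow> 0 * L"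
    by (intro tendsto_intros nd LIMSEQ_inverse_real_of_nat)
  then have d: "d \<longlonglongrightarrow> 0"
    by (simp del: of_nat_Suc add: mult.assoc[symmetric])
  then have small: "eventually (\<lambda>N. \<bar>d N\<bar> \<le> 1/2) sequentially"
    using order_tendstoD(2)[OF tendsto_rabs[OF d], of "1/2"] by (auto elim: eventually_mono)
  have "(\<lambda>N. 2 * \<bar>real (Suc N) * d N\<bar> * \<bar>d N\<bar>) \<longlonglongrightarrow> 2 * \<bar>L\<bar> * \<bar>0\<bar>"
    by (intro tendsto_intros nd d)
  then have error_bound: "(\<lambda>N. 2 * \<bar>real (Suc N) * d N\<bar> * \<bar>d N\<bar>) \<longlonglongrightarrow> 0"
    by simp
  have "eventually (\<lambda>N. norm (real (Suc N) * ln (1 + d N) - real (Suc N) * d N)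
      \<le> norm (2 * \<bar>real (Suc N) * d N\<bar> * \<bar>d N\<bar>) * 1) sequentially"
    using small
  proof eventually_elim
    case (elim N)
    have "\<bar>ln (1 + d N) - d N\<bar> \<le> 2 * (d N)^2"
      by (rule abs_ln_one_plus_x_minus_x_bound[OF elim])
    then show ?case
      by (simp add: abs_mult power2_eq_square flip: right_diff_distrib)
  qed
  with error_bound have "(\<lambda>N. real (Suc N) * ln (1 + d N) - real (Suc N) * d N) \<longlonglongrightarrow> 0"
    by (rule tendsto_0_le)
  from tendsto_add[OF this nd]
  have "(\<lambda>N. exp (real (Suc N) * ln (1 + d N))) \<longlonglongrightarrow> exp L"
    by (intro tendsto_exp) simp
  moreover have "eventually (\<lambda>N. exp (real (Suc N) * ln (1 + d N)) = (1 + d N) ^ Suc N) sequentially"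
    using small
  proof eventually_elim
    case (elim N)
    then have "1 + d N > 0"
      by linarith
    then show ?case
      by (simp add: exp_of_nat_mult del: of_nat_Suc power_Suc)
  qed
  ultimately show ?thesis
    by (simp add: Lim_transform_eventually)
qed

lemma scaled_geometric_sum_tendsto:
  fixes d e :: "nat \<Rightarrow> real"
  assumes nd: "(\<lambda>N. real (Suc N) * d N) \<longlonglongrightarrow> L" and ne: "(\<lambda>N. real (Suc N) * e N) \<longlonglongrightarrow> M"
    and "L \<noteq> 0"
  shows "(\<lambda>N. e N * (\<Sum>j<Suc N. (1 + d N) ^ j)) \<longlonglongrightarrow> M / L * (exp L - 1)"
proof -
  have "(\<lambda>N. real (Suc N) * e N / (real (Suc N) * d N) * ((1 + d N) ^ Suc N - 1))
      \<longlonglongrightarrow> M / L * (exp L - 1)"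
    using \<open>L \<noteq> 0\<close> by (intro tendsto_intros nd ne power_tendsto_exp[OF nd])
  moreover have "eventually (\<lambda>N. real (Suc N) * d N \<noteq> 0) sequentially"
    using nd \<open>L \<noteq> 0\<close> by (rule tendsto_imp_eventually_ne)
  then have "eventually (\<lambda>N. real (Suc N) * e N / (real (Suc N) * d N) * ((1 + d N) ^ Suc N - 1)
      = e N * (\<Sum>j<Suc N. (1 + d N) ^ j)) sequentially"
  proof eventually_elim
    case (elim N)
    have "(1 + d N) ^ Suc N - 1 = d N * (\<Sum>j<Suc N. (1 + d N) ^ j)"
      by (simp only: power_diff_1_eq) simp
    then show ?case
      using elim by (simp del: of_nat_Suc sum.lessThan_Suc power_Suc)
  qed
  ultimately show ?thesis
    by (simp add: Lim_transform_eventually)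
qed

section \<open>Asymptotics as the step factor tends to one\<close>

locale decay_grid =
  fixes a :: "nat \<Rightarrow> real" and \<tau> :: real
  assumes decay_tendsto: "a \<longlonglongrightarrow> 1"
    and decay_pos: "\<And>N. N \<ge> 1 \<Longrightarrow> 0 < a N"
    and decay_less_one: "\<And>N. N \<ge> 1 \<Longrightarrow> a N < 1"
    and scaled_gap_tendsto: "(\<lambda>N. real (Suc N) * (1 - a N)) \<longlonglongrightarrow> \<tau>"
    and horizon_pos: "\<tau> > 0"
begin

lemma gap_tendsto: "(\<lambda>N. 1 - a N) \<longlonglongrightarrow> 0"
  using tendsto_diff[OF tendsto_const decay_tendsto, of 1] by simp

lemma eventually_gap_nonzero: "eventually (\<lambda>N. 1 - a N \<noteq> 0) sequentially"
  using eventually_ge_at_top[of 1] by eventually_elim (use decay_less_one in force)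

definition omega_solution :: "real \<Rightarrow> nat \<Rightarrow> nat \<Rightarrow> real" where
  "omega_solution c N j = (1 - a N) / (c*(1 - a N) + a N)
     + a N / (c * (c*(1 - a N) + a N)) * (a N * (c-1) / c) ^ (N - j)"

lemma omega_sums_tendsto:
  fixes c :: real
  assumes c: "c > 1/2"
  shows "(\<lambda>N. \<Sum>j<Suc N. omega_solution c N j) \<longlonglongrightarrow> \<tau> + 1"
    and "(\<lambda>N. \<Sum>j<Suc N. (omega_solution c N j)^2) \<longlonglongrightarrow> 1 / (2*c - 1)"
proof -
  define D where "D N = c*(1 - a N) + a N" for N
  define Q where "Q N = a N / (c * D N)" for N
  define r where "r N = a N * (c-1) / c" for N
  define R where "R = (c-1) / c"
  have c0: "c \<noteq> 0"
    using c by simp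
  have D: "D \<longlonglongrightarrow> 1"
    using tendsto_add[OF tendsto_mult[OF tendsto_const gap_tendsto] decay_tendsto, of c]
    by (simp add: D_def[abs_def])
  have Q: "Q \<longlonglongrightarrow> 1 / c"
    using decay_tendsto D c0 by (auto simp: Q_def[abs_def] intro!: tendsto_eq_intros)
  have gap: "(\<lambda>N. (1 - a N) / D N) \<longlonglongrightarrow> 0"
    using tendsto_divide[OF gap_tendsto D] by simp
  have scaled: "(\<lambda>N. real (Suc N) * ((1 - a N) / D N)) \<longlonglongrightarrow> \<tau>"
    using tendsto_divide[OF scaled_gap_tendsto D] by simp
  have r: "r \<longlonglongrightarrow> R"
    using decay_tendsto c0 by (auto simp: r_def[abs_def] R_def intro!: tendsto_eq_intros)
  have "\<bar>R\<bar> < 1"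
    using c by (simp add: R_def abs_less_iff field_simps)
  then have R: "\<bar>R\<bar> < 1" "\<bar>R^2\<bar> < 1"
    by (simp_all add: abs_square_less_1)
  have G1: "(\<lambda>N. \<Sum>j<Suc N. r N ^ j) \<longlonglongrightarrow> c"
    using geometric_sum_tendsto[OF r R(1)] c0 by (simp add: R_def field_simps)
  have "(\<lambda>N. \<Sum>j<Suc N. (r N ^ 2) ^ j) \<longlonglongrightarrow> 1 / (1 - R^2)"
    using r R(2) by (intro geometric_sum_tendsto tendsto_intros)
  then have G2: "(\<lambda>N. \<Sum>j<Suc N. (r N ^ 2) ^ j) \<longlonglongrightarrow> c^2 / (2*c - 1)"
    using c0 by (simp add: R_def power2_eq_square field_simps)
  have sum_eq: "(\<Sum>j<Suc N. omega_solution c N j)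
      = real (Suc N) * ((1 - a N) / D N) + Q N * (\<Sum>j<Suc N. r N ^ j)" for N
    using sum_reversed_powers(1)[of "(1 - a N) / D N" "Q N" "r N" N]
    by (simp add: omega_solution_def D_def Q_def r_def del: sum.lessThan_Suc)
  show "(\<lambda>N. \<Sum>j<Suc N. omega_solution c N j) \<longlonglongrightarrow> \<tau> + 1"
    unfolding sum_eq using tendsto_add[OF scaled tendsto_mult[OF Q G1]] c0 by simp
  have sq_eq: "(\<Sum>j<Suc N. (omega_solution c N j)^2) = real (Suc N) * ((1 - a N) / D N) * ((1 - a N) / D N)
      + Q N^2 * (\<Sum>j<Suc N. (r N ^ 2) ^ j) + 2 * ((1 - a N) / D N) * Q N * (\<Sum>j<Suc N. r N ^ j)" for N
    using sum_reversed_powers(2)[of "(1 - a N) / D N" "Q N" "r N" N]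
    by (simp add: omega_solution_def D_def Q_def r_def power2_eq_square del: sum.lessThan_Suc)
  have "(\<lambda>N. \<Sum>j<Suc N. (omega_solution c N j)^2)
      \<longlonglongrightarrow> \<tau> * 0 + (1/c)^2 * (c^2 / (2*c - 1)) + 2 * 0 * (1/c) * c"
    unfolding sq_eq by (intro tendsto_intros scaled gap Q G1 G2)
  then show "(\<lambda>N. \<Sum>j<Suc N. (omega_solution c N j)^2) \<longlonglongrightarrow> 1 / (2*c - 1)"
    using c0 by (simp add: power2_eq_square)
qed

lemma omega_ratio_tendsto:
  assumes "c > 1/2"
  shows "(\<lambda>N. (\<Sum>j<Suc N. (omega_solution c N j)^2) / (\<Sum>j<Suc N. omega_solution c N j)^2)
           \<longlonglongrightarrow> 1 / ((2*c - 1) * (\<tau> + 1)^2)"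
  using tendsto_divide[OF omega_sums_tendsto(2)[OF assms] tendsto_power[OF omega_sums_tendsto(1)[OF assms]]]
    horizon_pos by simp

end

lemma nu_char_poly_at_one_plus:
  fixes a k \<delta> :: real
  shows "a*(1-k) * (1 + \<delta>)^2 + (k*(1 + a^2) - 3*a^2) * (1 + \<delta>) + a*(2-k)
           = (1-a) * (k*(1-a) + 3*a) + \<delta> * (k*(1-a)^2 + a*(2 - 3*a) + \<delta> * a*(1-k))"
  by (simp add: power2_eq_square algebra_simps)

lemma one_minus_ratio_square:
  fixes k :: real
  assumes "k \<noteq> 1"
  shows "1 - ((k-2) / (k-1))^2 = (2*k - 3) / (k-1)^2"
proof -
  have "(k-1)^2 \<noteq> 0"
    using assms by simp
  then show ?thesis
    by (simp add: power_divide field_simps) (simp add: power2_eq_square algebra_simps)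
qed

locale nu_grid = decay_grid +
  fixes k :: real
  assumes k_gt: "k > 3/2"
begin

text \<open>Clearing denominators in \<open>nu_symbol (a N) k z = 0\<close> gives the quadratic
  \<open>char_a N * z\<^sup>2 + char_b N * z + char_c N = 0\<close> (cf. \<open>nu_symbol_root\<close>).\<close>
definition char_a :: "nat \<Rightarrow> real" where "char_a N = a N * (1 - k)"
definition char_b :: "nat \<Rightarrow> real" where "char_b N = k * (1 + a N ^ 2) - 3 * a N ^ 2"
definition char_c :: "nat \<Rightarrow> real" where "char_c N = a N * (2 - k)"

definition root1 :: "nat \<Rightarrow> real" where
  "root1 N = (- char_b N - sqrt (discrim (char_a N) (char_b N) (char_c N))) / (2 * char_a N)"

definition root2 :: "nat \<Rightarrow> real" where
  "root2 N = (- char_b N + sqrt (discrim (char_a N) (char_b N) (char_c N))) / (2 * char_a N)"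

lemma discrim_tendsto: "(\<lambda>N. discrim (char_a N) (char_b N) (char_c N)) \<longlonglongrightarrow> 1"
proof -
  have "(\<lambda>N. discrim (char_a N) (char_b N) (char_c N))
      \<longlonglongrightarrow> (k*(1 + 1^2) - 3*1^2)^2 - 4 * (1*(1-k)) * (1*(2-k))"
    unfolding discrim_def char_a_def char_b_def char_c_def by (intro tendsto_intros decay_tendsto)
  then show ?thesis
    by (simp add: power2_eq_square algebra_simps)
qed

lemma root1_tendsto: "root1 \<longlonglongrightarrow> 1"
  and root2_tendsto: "root2 \<longlonglongrightarrow> (k-2) / (k-1)"
proof -
  have k: "1 - k \<noteq> 0" "k - 1 \<noteq> 0"
    using k_gt by auto
  have A: "char_a \<longlonglongrightarrow> 1 - k"
    using tendsto_mult[OF decay_tendsto tendsto_const, of "1 - k"] by (simp add: char_a_def[abs_def])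
  have B: "char_b \<longlonglongrightarrow> 2*k - 3"
  proof -
    have "char_b \<longlonglongrightarrow> k * (1 + 1^2) - 3 * 1^2"
      unfolding char_b_def[abs_def] by (intro tendsto_intros decay_tendsto)
    then show ?thesis
      by (simp add: mult.commute)
  qed
  have "root1 \<longlonglongrightarrow> (- (2*k - 3) - sqrt 1) / (2 * (1 - k))"
    unfolding root1_def[abs_def] using k by (intro tendsto_intros A B discrim_tendsto) simp
  then show "root1 \<longlonglongrightarrow> 1"
    using k by (simp add: field_simps)
  have "root2 \<longlonglongrightarrow> (- (2*k - 3) + sqrt 1) / (2 * (1 - k))"
    unfolding root2_def[abs_def] using k by (intro tendsto_intros A B discrim_tendsto) simp
  moreover have "(- (2*k - 3) + sqrt 1) / (2 * (1 - k)) = (k-2) / (k-1)"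
    using k by (simp add: field_simps)
  ultimately show "root2 \<longlonglongrightarrow> (k-2) / (k-1)"
    by simp
qed

lemma roots_eventually:
  "eventually (\<lambda>N. N \<ge> 1 \<and> char_a N * root1 N ^ 2 + char_b N * root1 N + char_c N = 0
                         \<and> char_a N * root2 N ^ 2 + char_b N * root2 N + char_c N = 0) sequentially"
proof -
  have "eventually (\<lambda>N. discrim (char_a N) (char_b N) (char_c N) > 0) sequentially"
    using discrim_tendsto by (rule order_tendstoD) simp
  moreover have "eventually (\<lambda>N. N \<ge> 1) sequentially"
    by (rule eventually_ge_at_top)
  ultimately show ?thesis
  proof eventually_elim
    case (elim N)
    then have "char_a N \<noteq> 0"
      using decay_pos[of N] k_gt by (simp add: char_a_def)
    then show ?case
      using elim discriminant_nonneg[of "char_a N" "char_b N" "char_c N" "root1 N"]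
        discriminant_nonneg[of "char_a N" "char_b N" "char_c N" "root2 N"]
      by (simp add: root1_def root2_def)
  qed
qed

text \<open>Expanding the characteristic polynomial around \<open>1\<close> shows that \<open>root1\<close> departs from \<open>1\<close>
  three times as fast as \<open>a\<close> does.\<close>
lemma root1_gap_ratio_tendsto: "(\<lambda>N. (root1 N - 1) / (1 - a N)) \<longlonglongrightarrow> 3"
proof -
  define B where "B N = k*(1 - a N)^2 + a N*(2 - 3*a N) + (root1 N - 1) * a N*(1-k)" for N
  have "B \<longlonglongrightarrow> k*(1-1)^2 + 1*(2 - 3*1) + (1 - 1)*1*(1-k)"
    unfolding B_def[abs_def] by (intro tendsto_intros decay_tendsto root1_tendsto)
  then have B: "B \<longlonglongrightarrow> -1"
    by simp
  have "(\<lambda>N. - (k*(1 - a N) + 3*a N) / B N) \<longlonglongrightarrow> - (k*(1-1) + 3*1) / -1"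
    by (intro tendsto_intros decay_tendsto B) simp
  then have lim: "(\<lambda>N. - (k*(1 - a N) + 3*a N) / B N) \<longlonglongrightarrow> 3"
    by simp
  have "eventually (\<lambda>N. B N < 0) sequentially"
    using B by (rule order_tendstoD) simp
  with roots_eventually eventually_gap_nonzero
  have "eventually (\<lambda>N. - (k*(1 - a N) + 3*a N) / B N = (root1 N - 1) / (1 - a N)) sequentially"
  proof eventually_elim
    case (elim N)
    have "(1 - a N) * (k*(1 - a N) + 3*a N) + (root1 N - 1) * B N = 0"
      using elim nu_char_poly_at_one_plus[of "a N" k "root1 N - 1"]
      by (simp add: char_a_def char_b_def char_c_def B_def)
    then show ?case
      using elim by (simp add: field_simps)
  qed
  with lim show ?thesis
    by (rule Lim_transform_eventually)
qed

lemma scaled_root1_tendsto: "(\<lambda>N. real (Suc N) * (root1 N - 1)) \<longlonglongrightarrow> 3 * \<tau>"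
proof -
  have "(\<lambda>N. real (Suc N) * (1 - a N) * ((root1 N - 1) / (1 - a N))) \<longlonglongrightarrow> \<tau> * 3"
    by (intro tendsto_mult scaled_gap_tendsto root1_gap_ratio_tendsto)
  moreover have "eventually (\<lambda>N. real (Suc N) * (1 - a N) * ((root1 N - 1) / (1 - a N))
      = real (Suc N) * (root1 N - 1)) sequentially"
    using eventually_gap_nonzero by eventually_elim simp
  ultimately show ?thesis
    by (simp add: Lim_transform_eventually mult.commute)
qed

lemma root1_power_tendsto: "(\<lambda>N. root1 N ^ Suc N) \<longlonglongrightarrow> exp (3 * \<tau>)"
  using power_tendsto_exp[OF scaled_root1_tendsto] by simp

lemma root1_offsets_tendsto:
  "(\<lambda>N. (root1 N - a N) / (1 - a N)) \<longlonglongrightarrow> 4"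
  "(\<lambda>N. (1 - a N * root1 N) / (1 - a N)) \<longlonglongrightarrow> -2"
proof -
  have "(\<lambda>N. 1 + (root1 N - 1) / (1 - a N)) \<longlonglongrightarrow> 1 + 3"
    by (intro tendsto_intros root1_gap_ratio_tendsto)
  moreover have "eventually (\<lambda>N. 1 + (root1 N - 1) / (1 - a N) = (root1 N - a N) / (1 - a N)) sequentially"
    using eventually_gap_nonzero by eventually_elim (simp add: field_simps)
  ultimately show "(\<lambda>N. (root1 N - a N) / (1 - a N)) \<longlonglongrightarrow> 4"
    by (simp add: Lim_transform_eventually)
  have "(\<lambda>N. 1 - a N * ((root1 N - 1) / (1 - a N))) \<longlonglongrightarrow> 1 - 1 * 3"
    by (intro tendsto_intros decay_tendsto root1_gap_ratio_tendsto)
  moreover have "eventually (\<lambda>N. 1 - a N * ((root1 N - 1) / (1 - a N)) = (1 - a N * root1 N) / (1 - a N))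
      sequentially"
    using eventually_gap_nonzero by eventually_elim (simp add: field_simps)
  ultimately show "(\<lambda>N. (1 - a N * root1 N) / (1 - a N)) \<longlonglongrightarrow> -2"
    by (simp add: Lim_transform_eventually)
qed

lemma root2_limit_bounds: "\<bar>(k-2) / (k-1)\<bar> < 1" "(k-2) / (k-1) \<noteq> 1"
  using k_gt by (auto simp: abs_less_iff field_simps)

text \<open>Rescaled coefficients of the boundary conditions imposed by the first row (\<open>head\<close>) and the
  last row (\<open>tail\<close>) of \<open>nu_system\<close>, cf. \<open>nu_system_solution\<close>.\<close>
definition head1 :: "nat \<Rightarrow> real" where "head1 N = (1 - a N) / (root1 N - a N)"
definition tail1 :: "nat \<Rightarrow> real" where "tail1 N = (1 - a N) * root1 N ^ Suc N / (1 - a N * root1 N)"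
definition head2 :: "nat \<Rightarrow> real" where "head2 N = 1 / (root2 N - a N)"
definition tail2 :: "nat \<Rightarrow> real" where "tail2 N = root2 N ^ Suc N / (1 - a N * root2 N)"

lemma head_tail_tendsto:
  "head1 \<longlonglongrightarrow> 1/4" "tail1 \<longlonglongrightarrow> - exp (3*\<tau>) / 2" "head2 \<longlonglongrightarrow> 1 - k" "tail2 \<longlonglongrightarrow> 0"
proof -
  have "head1 = (\<lambda>N. 1 / ((root1 N - a N) / (1 - a N)))"
    by (simp add: head1_def[abs_def])
  then show "head1 \<longlonglongrightarrow> 1/4"
    using tendsto_divide[OF tendsto_const root1_offsets_tendsto(1), of 1] by simp
  have "tail1 = (\<lambda>N. root1 N ^ Suc N / ((1 - a N * root1 N) / (1 - a N)))"
    by (simp add: tail1_def[abs_def] ac_simps)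
  then show "tail1 \<longlonglongrightarrow> - exp (3*\<tau>) / 2"
    using tendsto_divide[OF root1_power_tendsto root1_offsets_tendsto(2)] by simp
  have "k - 1 \<noteq> 0"
    using k_gt by simp
  then have "head2 \<longlonglongrightarrow> 1 / ((k-2) / (k-1) - 1)"
    unfolding head2_def[abs_def] using root2_limit_bounds(2)
    by (intro tendsto_intros root2_tendsto decay_tendsto) simp
  then show "head2 \<longlonglongrightarrow> 1 - k"
    using \<open>k - 1 \<noteq> 0\<close> by (simp add: field_simps)
  have "1 - 1 * ((k-2) / (k-1)) \<noteq> 0"
    using root2_limit_bounds(2) by linarith
  then have "tail2 \<longlonglongrightarrow> 0 / (1 - 1 * ((k-2) / (k-1)))"
    unfolding tail2_def[abs_def]
    by (intro tendsto_intros tendsto_power_Suc_zero[OF root2_tendsto root2_limit_bounds(1)]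
        root2_tendsto decay_tendsto)
  then show "tail2 \<longlonglongrightarrow> 0"
    by simp
qed

definition cramer :: "nat \<Rightarrow> real" where "cramer N = head1 N * tail2 N - head2 N * tail1 N"
definition mean_coeff :: "nat \<Rightarrow> real" where "mean_coeff N = 1 / (3 * a N + k * (1 - a N))"
definition root1_coeff :: "nat \<Rightarrow> real" where
  "root1_coeff N = - mean_coeff N * (tail2 N - head2 N) / cramer N"
definition root2_coeff :: "nat \<Rightarrow> real" where
  "root2_coeff N = - mean_coeff N * (head1 N - tail1 N) / cramer N"

text \<open>The coefficient of \<open>root1 N ^ j\<close> vanishes at the rate \<open>1 - a N\<close>, which is therefore split
  off: \<open>root1_coeff\<close> itself converges to a nonzero limit.\<close>
definition nu_solution :: "nat \<Rightarrow> nat \<Rightarrow> real" where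
  "nu_solution N j = mean_coeff N * (1 - a N) + (1 - a N) * root1_coeff N * root1 N ^ j
                + root2_coeff N * root2 N ^ j"

lemma coefficients_tendsto:
  "cramer \<longlonglongrightarrow> (1-k) * exp (3*\<tau>) / 2"
  "mean_coeff \<longlonglongrightarrow> 1/3"
  "root1_coeff \<longlonglongrightarrow> 2 / (3 * exp (3*\<tau>))"
  "root2_coeff \<longlonglongrightarrow> (1 + 2 * exp (3*\<tau>)) / (6 * (k-1) * exp (3*\<tau>))"
proof -
  have k: "1 - k \<noteq> 0" "k - 1 \<noteq> 0"
    using k_gt by auto
  have "cramer \<longlonglongrightarrow> 1/4 * 0 - (1-k) * (- exp (3*\<tau>) / 2)"
    unfolding cramer_def[abs_def] by (intro tendsto_intros head_tail_tendsto)
  then show cramer: "cramer \<longlonglongrightarrow> (1-k) * exp (3*\<tau>) / 2"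
    by simp
  have "mean_coeff \<longlonglongrightarrow> 1 / (3 * 1 + k * (1 - 1))"
    unfolding mean_coeff_def[abs_def] by (intro tendsto_intros decay_tendsto) simp
  then show mean: "mean_coeff \<longlonglongrightarrow> 1/3"
    by simp
  have "root1_coeff \<longlonglongrightarrow> - (1/3) * (0 - (1-k)) / ((1-k) * exp (3*\<tau>) / 2)"
    unfolding root1_coeff_def[abs_def] using k
    by (intro tendsto_intros mean cramer head_tail_tendsto) simp
  moreover have "- (1/3) * (0 - (1-k)) / ((1-k) * exp (3*\<tau>) / 2) = 2 / (3 * exp (3*\<tau>))"
    using k by (simp add: field_simps)
  ultimately show "root1_coeff \<longlonglongrightarrow> 2 / (3 * exp (3*\<tau>))"
    by simp
  have "root2_coeff \<longlonglongrightarrow> - (1/3) * (1/4 - - exp (3*\<tau>) / 2) / ((1-k) * exp (3*\<tau>) / 2)"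
    unfolding root2_coeff_def[abs_def] using k
    by (intro tendsto_intros mean cramer head_tail_tendsto) simp
  moreover have "- (1/3) * (1/4 - - exp (3*\<tau>) / 2) / ((1-k) * exp (3*\<tau>) / 2)
      = (1 + 2 * exp (3*\<tau>)) / (6 * (k-1) * exp (3*\<tau>))"
    using k by (simp add: field_simps)
  ultimately show "root2_coeff \<longlonglongrightarrow> (1 + 2 * exp (3*\<tau>)) / (6 * (k-1) * exp (3*\<tau>))"
    by simp
qed

lemma nondegenerate_eventually:
  "eventually (\<lambda>N. N \<ge> 1 \<and> root1 N \<noteq> a N \<and> root2 N \<noteq> a N \<and> a N * root1 N \<noteq> 1
       \<and> a N * root2 N \<noteq> 1 \<and> nu_symbol (a N) k (root1 N) = 0 \<and> nu_symbol (a N) k (root2 N) = 0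
       \<and> cramer N \<noteq> 0) sequentially"
proof -
  define Z where "Z = (k-2) / (k-1)"
  have Z: "Z - 1 \<noteq> 0" "1 - 1 * Z \<noteq> 0"
    using root2_limit_bounds(2) by (simp_all add: Z_def)
  have "(\<lambda>N. root2 N - a N) \<longlonglongrightarrow> Z - 1" "(\<lambda>N. 1 - a N * root2 N) \<longlonglongrightarrow> 1 - 1 * Z"
    unfolding Z_def by (intro tendsto_intros root2_tendsto decay_tendsto)+
  from this[THEN tendsto_imp_eventually_ne] Z
  have "eventually (\<lambda>N. root2 N - a N \<noteq> 0) sequentially"
    "eventually (\<lambda>N. 1 - a N * root2 N \<noteq> 0) sequentially"
    by blast+
  moreover have "eventually (\<lambda>N. (root1 N - a N) / (1 - a N) \<noteq> 0) sequentially"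
    by (rule tendsto_imp_eventually_ne[OF root1_offsets_tendsto(1)]) simp
  moreover have "eventually (\<lambda>N. (1 - a N * root1 N) / (1 - a N) \<noteq> 0) sequentially"
    by (rule tendsto_imp_eventually_ne[OF root1_offsets_tendsto(2)]) simp
  moreover have "eventually (\<lambda>N. cramer N \<noteq> 0) sequentially"
    by (rule tendsto_imp_eventually_ne[OF coefficients_tendsto(1)]) (use k_gt in simp)
  ultimately show ?thesis
    using roots_eventually
  proof eventually_elim
    case (elim N)
    then have "root1 N \<noteq> a N" "root2 N \<noteq> a N" "a N * root1 N \<noteq> 1" "a N * root2 N \<noteq> 1"
      by auto
    with elim show ?case
      by (auto intro!: nu_symbol_root simp: char_a_def char_b_def char_c_def)
  qed
qed

lemma nu_solution_solves:
  "eventually (\<lambda>N. nu_system (a N) k (Suc N) *\<^sub>v vec (Suc N) (nu_solution N) = ones_vec (Suc N))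
     sequentially"
  using nondegenerate_eventually
proof eventually_elim
  case (elim N)
  then have a: "0 < a N" "a N < 1"
    using decay_pos decay_less_one by auto
  have "3 * a N + k * (1 - a N) > 0"
    using a k_gt by (intro add_pos_pos mult_pos_pos) auto
  then have mean: "mean_coeff N * (3 * a N + k * (1 - a N)) = 1"
    by (simp add: mean_coeff_def)
  note boundary = cramer_solution[of "head1 N" "tail2 N" "head2 N" "tail1 N" "mean_coeff N",
      folded cramer_def, folded root1_coeff_def root2_coeff_def]
  have "(1 - a N) * root1_coeff N / (root1 N - a N) = root1_coeff N * head1 N"
    "root2_coeff N / (root2 N - a N) = root2_coeff N * head2 N"
    "(1 - a N) * root1_coeff N * root1 N ^ Suc N / (1 - a N * root1 N) = root1_coeff N * tail1 N"
    "root2_coeff N * root2 N ^ Suc N / (1 - a N * root2 N) = root2_coeff N * tail2 N"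
    by (simp_all add: head1_def head2_def tail1_def tail2_def)
  then have head: "mean_coeff N + (1 - a N) * root1_coeff N / (root1 N - a N)
      + root2_coeff N / (root2 N - a N) = 0"
    and tail: "mean_coeff N + (1 - a N) * root1_coeff N * root1 N ^ Suc N / (1 - a N * root1 N)
      + root2_coeff N * root2 N ^ Suc N / (1 - a N * root2 N) = 0"
    using boundary elim by simp_all
  have roots: "root1 N \<noteq> a N" "root2 N \<noteq> a N" "a N * root1 N \<noteq> 1" "a N * root2 N \<noteq> 1"
    and symbols: "nu_symbol (a N) k (root1 N) = 0" "nu_symbol (a N) k (root2 N) = 0"
    using elim by auto
  show ?case
  proof (rule eq_vecI)
    fix i
    assume "i < dim_vec (ones_vec (Suc N))"
    then have "i < Suc N"
      by (simp add: ones_vec_def)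
    then show "(nu_system (a N) k (Suc N) *\<^sub>v vec (Suc N) (nu_solution N)) $ i = ones_vec (Suc N) $ i"
      using nu_system_solution[OF roots symbols _ _ mean head tail] a
      by (simp add: nu_solution_def[abs_def] ones_vec_def mult.commute)
  qed (simp add: nu_system_def ones_vec_def)
qed

lemma sum_nu_solution_eq:
  "(\<Sum>j<Suc N. nu_solution N j) = mean_coeff N * (real (Suc N) * (1 - a N))
     + root1_coeff N * ((1 - a N) * (\<Sum>j<Suc N. root1 N ^ j)) + root2_coeff N * (\<Sum>j<Suc N. root2 N ^ j)"
  unfolding nu_solution_def sum_three_powers by (simp add: algebra_simps del: sum.lessThan_Suc)

lemma sum_squares_nu_solution_eq:
  "(\<Sum>j<Suc N. (nu_solution N j)^2)
     = (mean_coeff N)^2 * (1 - a N) * (real (Suc N) * (1 - a N))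
       + (root1_coeff N)^2 * (1 - a N) * ((1 - a N) * (\<Sum>j<Suc N. (root1 N ^ 2) ^ j))
       + (root2_coeff N)^2 * (\<Sum>j<Suc N. (root2 N ^ 2) ^ j)
       + 2 * mean_coeff N * (1 - a N) * root1_coeff N * ((1 - a N) * (\<Sum>j<Suc N. root1 N ^ j))
       + 2 * mean_coeff N * (1 - a N) * root2_coeff N * (\<Sum>j<Suc N. root2 N ^ j)
       + 2 * root1_coeff N * root2_coeff N * ((1 - a N) * (\<Sum>j<Suc N. (root1 N * root2 N) ^ j))"
  unfolding nu_solution_def sum_three_powers_squared
  by (simp add: power2_eq_square algebra_simps del: sum.lessThan_Suc)

lemma root1_geometric_sums_tendsto:
  "(\<lambda>N. (1 - a N) * (\<Sum>j<Suc N. root1 N ^ j)) \<longlonglongrightarrow> (exp (3*\<tau>) - 1) / 3"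
  "(\<lambda>N. (1 - a N) * (\<Sum>j<Suc N. (root1 N ^ 2) ^ j)) \<longlonglongrightarrow> (exp (6*\<tau>) - 1) / 6"
proof -
  have "(\<lambda>N. real (Suc N) * (root1 N - 1) * (root1 N + 1)) \<longlonglongrightarrow> 3 * \<tau> * (1 + 1)"
    by (intro tendsto_intros scaled_root1_tendsto root1_tendsto)
  then have sq: "(\<lambda>N. real (Suc N) * (root1 N ^ 2 - 1)) \<longlonglongrightarrow> 6 * \<tau>"
    by (simp add: power2_eq_square algebra_simps)
  show "(\<lambda>N. (1 - a N) * (\<Sum>j<Suc N. root1 N ^ j)) \<longlonglongrightarrow> (exp (3*\<tau>) - 1) / 3"
    using scaled_geometric_sum_tendsto[OF scaled_root1_tendsto scaled_gap_tendsto] horizon_pos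
    by simp
  show "(\<lambda>N. (1 - a N) * (\<Sum>j<Suc N. (root1 N ^ 2) ^ j)) \<longlonglongrightarrow> (exp (6*\<tau>) - 1) / 6"
    using scaled_geometric_sum_tendsto[OF sq scaled_gap_tendsto] horizon_pos
    by simp
qed

lemma nu_sum_tendsto:
  "(\<lambda>N. \<Sum>j<Suc N. nu_solution N j)
     \<longlonglongrightarrow> (6 * \<tau> * exp (3*\<tau>) + 10 * exp (3*\<tau>) - 1) / (18 * exp (3*\<tau>))"
proof -
  define E where "E = exp (3*\<tau>)"
  have k: "k - 1 \<noteq> 0"
    using k_gt by simp
  have "(\<lambda>N. \<Sum>j<Suc N. nu_solution N j) \<longlonglongrightarrow> 1/3 * \<tau> + 2 / (3 * E) * ((E - 1) / 3)
      + (1 + 2 * E) / (6 * (k-1) * E) * (1 / (1 - (k-2) / (k-1)))"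
    unfolding E_def sum_nu_solution_eq
    by (intro tendsto_intros coefficients_tendsto scaled_gap_tendsto
        root1_geometric_sums_tendsto geometric_sum_tendsto[OF root2_tendsto root2_limit_bounds(1)])
  moreover have "1/3 * \<tau> + 2 / (3 * E) * ((E - 1) / 3) + (1 + 2 * E) / (6 * (k-1) * E) * (1 / (1 - (k-2) / (k-1)))
      = (6 * \<tau> * E + 10 * E - 1) / (18 * E)"
    using k by (simp add: E_def field_simps)
  ultimately show ?thesis
    by (simp add: E_def)
qed

lemma nu_sum_squares_tendsto:
  "(\<lambda>N. \<Sum>j<Suc N. (nu_solution N j)^2)
     \<longlonglongrightarrow> (1 + 2 * exp (3*\<tau>))^2 / (36 * exp (3*\<tau>)^2 * (2*k - 3))"
proof -
  define E where "E = exp (3*\<tau>)"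
  define Z where "Z = (k-2) / (k-1)"
  have "\<bar>Z^2\<bar> < 1"
    using root2_limit_bounds(1) by (simp add: Z_def abs_square_less_1)
  then have sq2: "(\<lambda>N. \<Sum>j<Suc N. (root2 N ^ 2) ^ j) \<longlonglongrightarrow> 1 / (1 - Z^2)"
    by (intro geometric_sum_tendsto tendsto_intros root2_tendsto[folded Z_def])
  have mixed: "(\<lambda>N. \<Sum>j<Suc N. (root1 N * root2 N) ^ j) \<longlonglongrightarrow> 1 / (1 - 1 * Z)"
    using root2_limit_bounds(1)
    by (intro geometric_sum_tendsto tendsto_intros root1_tendsto root2_tendsto[folded Z_def])
      (simp add: Z_def)
  have "(\<lambda>N. \<Sum>j<Suc N. (nu_solution N j)^2)
      \<longlonglongrightarrow> (1/3)^2 * 0 * \<tau> + (2 / (3 * E))^2 * 0 * ((exp (6*\<tau>) - 1) / 6)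
          + ((1 + 2 * E) / (6 * (k-1) * E))^2 * (1 / (1 - Z^2))
          + 2 * (1/3) * 0 * (2 / (3 * E)) * ((E - 1) / 3)
          + 2 * (1/3) * 0 * ((1 + 2 * E) / (6 * (k-1) * E)) * (1 / (1 - Z))
          + 2 * (2 / (3 * E)) * ((1 + 2 * E) / (6 * (k-1) * E)) * (0 * (1 / (1 - 1 * Z)))"
    unfolding E_def Z_def sum_squares_nu_solution_eq
    by (intro tendsto_intros coefficients_tendsto scaled_gap_tendsto gap_tendsto
        root1_geometric_sums_tendsto geometric_sum_tendsto[OF root2_tendsto root2_limit_bounds(1)]
        sq2[unfolded Z_def] mixed[unfolded Z_def])
  moreover have "((1 + 2 * E) / (6 * (k-1) * E))^2 * (1 / (1 - Z^2))
      = (1 + 2 * E)^2 / (36 * E^2 * (2*k - 3))"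
  proof -
    have "(1 + 2 * E) / (6 * (k-1) * E) * (k-1) = (1 + 2 * E) / (6 * E)"
      using k_gt by (simp add: E_def field_simps)
    then have G: "((1 + 2 * E) / (6 * (k-1) * E))^2 * (k-1)^2 = ((1 + 2 * E) / (6 * E))^2"
      by (metis power_mult_distrib)
    have "((1 + 2 * E) / (6 * (k-1) * E))^2 * (1 / (1 - Z^2))
        = ((1 + 2 * E) / (6 * (k-1) * E))^2 * (k-1)^2 / (2*k - 3)"
      using k_gt by (simp add: Z_def one_minus_ratio_square)
    also have "\<dots> = (1 + 2 * E)^2 / (36 * E^2 * (2*k - 3))"
      unfolding G by (simp add: power_divide power_mult_distrib)
    finally show ?thesis .
  qed
  ultimately show ?thesis
    by (simp add: E_def)
qed

lemma nu_ratio_tendsto: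
  "(\<lambda>N. (\<Sum>j<Suc N. (nu_solution N j)^2) / (\<Sum>j<Suc N. nu_solution N j)^2)
     \<longlonglongrightarrow> 9 * (1 + 2 * exp (3*\<tau>))^2 / ((2*k - 3) * (6 * \<tau> * exp (3*\<tau>) + 10 * exp (3*\<tau>) - 1)^2)"
proof -
  define E where "E = exp (3*\<tau>)"
  have E: "E \<ge> 1"
    using horizon_pos by (simp add: E_def)
  have P: "6 * \<tau> * E + 10 * E - 1 > 0"
    using E horizon_pos by (smt (verit) mult_pos_pos)
  have "(\<lambda>N. (\<Sum>j<Suc N. (nu_solution N j)^2) / (\<Sum>j<Suc N. nu_solution N j)^2)
      \<longlonglongrightarrow> (1 + 2 * E)^2 / (36 * E^2 * (2*k - 3)) / ((6 * \<tau> * E + 10 * E - 1) / (18 * E))^2"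
    unfolding E_def using P E_def
    by (intro tendsto_intros nu_sum_squares_tendsto nu_sum_tendsto) simp
  moreover have "(1 + 2 * E)^2 / (36 * E^2 * (2*k - 3)) / ((6 * \<tau> * E + 10 * E - 1) / (18 * E))^2
      = 9 * (1 + 2 * E)^2 / ((2*k - 3) * (6 * \<tau> * E + 10 * E - 1)^2)"
    using E P k_gt by (simp add: power_divide power_mult_distrib field_simps)
  ultimately show ?thesis
    by (simp add: E_def)
qed

end

section \<open>The normalised weights\<close>

lemma decay_grid_exp:
  assumes "\<rho> > 0" "T > 0"
  shows "decay_grid (\<lambda>N. exp (- \<rho> * T / real N)) (\<rho> * T)"
proof
  define c where "c = \<rho> * T"
  have c: "c > 0"
    using assms by (simp add: c_def)
  have "(\<lambda>N. exp (- c / real N)) \<longlonglongrightarrow> 1"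
    by real_asymp
  then show "(\<lambda>N. exp (- \<rho> * T / real N)) \<longlonglongrightarrow> 1"
    by (simp add: c_def)
  have "(\<lambda>N. real (Suc N) * (1 - exp (- c / real N))) \<longlonglongrightarrow> c"
    using c by real_asymp
  then show "(\<lambda>N. real (Suc N) * (1 - exp (- \<rho> * T / real N))) \<longlonglongrightarrow> \<rho> * T"
    by (simp add: c_def)
  fix N :: nat
  assume "N \<ge> 1"
  then show "exp (- \<rho> * T / real N) < 1"
    using c by (simp add: c_def divide_neg_pos)
qed (use assms in simp_all)

lemma omega_vec_eq:
  assumes "\<rho> > 0" "T > 0" "\<theta> > 0" "N \<ge> 1"
  defines "a \<equiv> exp (- \<rho> * T / real N)" and "c \<equiv> 1/2 + 2*\<theta>"
  shows "omega_vec \<rho> T \<theta> N = vec (Suc N) (\<lambda>j. (1 - a) / (c*(1 - a) + a)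
           + a / (c * (c*(1 - a) + a)) * (a * (c-1) / c) ^ (N - j))"
proof -
  interpret decay_grid "\<lambda>N. exp (- \<rho> * T / real N)" "\<rho> * T"
    using assms(1,2) by (rule decay_grid_exp)
  have a: "0 < a" "a < 1" and c: "c > 0"
    using decay_pos decay_less_one assms by (auto simp: a_def c_def)
  have "omega_system a c (N+1) \<in> carrier_mat (N+1) (N+1)"
    by (simp add: omega_system_def)
  moreover have "det (omega_system a c (N+1)) \<noteq> 0"
    using c by (simp add: det_omega_system)
  moreover have "omega_system a c (N+1) *\<^sub>v vec (Suc N) (\<lambda>j. (1 - a) / (c*(1 - a) + a)
      + a / (c * (c*(1 - a) + a)) * (a * (c-1) / c) ^ (N - j)) = ones_vec (N+1)"
    using omega_system_solution[OF a c, of _ "Suc N"]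
    by (intro eq_vecI) (auto simp: ones_vec_def omega_system_def)
  ultimately show ?thesis
    unfolding omega_vec_def omega_matrix_eq_omega_system a_def[symmetric] c_def[symmetric]
    by (intro minv_mult_vec_ones) auto
qed

lemma nu_vec_eq:
  assumes "\<rho> > 0" "T > 0" "\<theta> > 0" "N \<ge> 1"
    and "nu_system (exp (- \<rho> * T / real N)) (3/2 + 2*\<theta>) (Suc N) *\<^sub>v vec (Suc N) f = ones_vec (Suc N)"
  shows "nu_vec \<rho> T \<theta> N = vec (Suc N) f"
proof -
  interpret decay_grid "\<lambda>N. exp (- \<rho> * T / real N)" "\<rho> * T"
    using assms(1,2) by (rule decay_grid_exp)
  have "\<bar>exp (- \<rho> * T / real N)\<bar> \<le> 1"
    using decay_less_one[OF assms(4)] by simp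
  then show ?thesis
    unfolding nu_vec_def nu_matrix_eq_nu_system using assms(3,5)
    by (intro minv_mult_vec_ones det_nu_system_nonzero) (auto simp: nu_system_def)
qed

lemma w_vec_dot_tendsto:
  assumes "\<rho> > 0" "T > 0" "\<theta> > 0"
  shows "(\<lambda>N. \<theta> * (w_vec \<rho> T \<theta> N \<bullet> w_vec \<rho> T \<theta> N)) \<longlonglongrightarrow> 1 / (4 * (\<rho>*T + 1)^2)"
proof -
  define a where "a N = exp (- \<rho> * T / real N)" for N
  interpret decay_grid a "\<rho> * T"
    unfolding a_def[abs_def] using assms(1,2) by (rule decay_grid_exp)
  define c where "c = 1/2 + 2*\<theta>"
  have "(\<lambda>N. \<theta> * ((\<Sum>j<Suc N. (omega_solution c N j)^2) / (\<Sum>j<Suc N. omega_solution c N j)^2))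
      \<longlonglongrightarrow> \<theta> * (1 / ((2*c - 1) * (\<rho>*T + 1)^2))"
    using assms(3) by (intro tendsto_mult_left omega_ratio_tendsto) (simp add: c_def)
  moreover have "eventually (\<lambda>N. \<theta> * ((\<Sum>j<Suc N. (omega_solution c N j)^2)
      / (\<Sum>j<Suc N. omega_solution c N j)^2) = \<theta> * (w_vec \<rho> T \<theta> N \<bullet> w_vec \<rho> T \<theta> N)) sequentially"
    using eventually_ge_at_top[of 1]
  proof eventually_elim
    case (elim N)
    then have "omega_vec \<rho> T \<theta> N = vec (Suc N) (omega_solution c N)"
      using omega_vec_eq[OF assms elim] by (simp add: omega_solution_def[abs_def] a_def c_def)
    then show ?case
      by (simp add: w_vec_def normalized_dot_self del: sum.lessThan_Suc)
  qed
  ultimately show ?thesis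
    using assms(3) by (simp add: Lim_transform_eventually c_def)
qed

lemma v_vec_dot_tendsto:
  assumes "\<rho> > 0" "T > 0" "\<theta> > 0"
  shows "(\<lambda>N. \<theta> * (v_vec \<rho> T \<theta> N \<bullet> v_vec \<rho> T \<theta> N)) \<longlonglongrightarrow>
           9 * (1 + 2 * exp (3*\<rho>*T))^2 / (4 * (1 - 2 * exp (3*\<rho>*T) * (5 + 3*\<rho>*T))^2)"
proof -
  interpret nu_grid "\<lambda>N. exp (- \<rho> * T / real N)" "\<rho> * T" "3/2 + 2*\<theta>"
    using decay_grid_exp[OF assms(1,2)] assms(3) by (simp add: nu_grid_def nu_grid_axioms_def)
  define E where "E = exp (3*\<rho>*T)"
  have "(\<lambda>N. \<theta> * ((\<Sum>j<Suc N. (nu_solution N j)^2) / (\<Sum>j<Suc N. nu_solution N j)^2))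
      \<longlonglongrightarrow> \<theta> * (9 * (1 + 2 * E)^2 / (4 * \<theta> * (6 * (\<rho>*T) * E + 10 * E - 1)^2))"
    using nu_ratio_tendsto by (intro tendsto_mult_left) (simp add: E_def mult.assoc)
  moreover have "eventually (\<lambda>N. \<theta> * ((\<Sum>j<Suc N. (nu_solution N j)^2) / (\<Sum>j<Suc N. nu_solution N j)^2)
      = \<theta> * (v_vec \<rho> T \<theta> N \<bullet> v_vec \<rho> T \<theta> N)) sequentially"
    using eventually_ge_at_top[of 1] nu_solution_solves
  proof eventually_elim
    case (elim N)
    then have "nu_vec \<rho> T \<theta> N = vec (Suc N) (nu_solution N)"
      using nu_vec_eq[OF assms] by simp
    then show ?case
      by (simp add: v_vec_def normalized_dot_self del: sum.lessThan_Suc)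
  qed
  moreover have "(1 - 2 * E * (5 + 3*\<rho>*T))^2 = (6 * (\<rho>*T) * E + 10 * E - 1)^2"
    by (simp add: power2_eq_square algebra_simps)
  ultimately show ?thesis
    using assms(3) by (simp add: Lim_transform_eventually E_def)
qed

theorem lemmaA7:
  fixes \<rho> T \<theta> :: real
  assumes "\<rho> > 0" and "T > 0" and "\<theta> > 0"
  shows "(\<lambda>N. \<theta> * (v_vec \<rho> T \<theta> N \<bullet> v_vec \<rho> T \<theta> N)) \<longlonglongrightarrow>
           9 * (1 + 2 * exp (3*\<rho>*T))^2 / (4 * (1 - 2 * exp (3*\<rho>*T) * (5 + 3*\<rho>*T))^2)
    \<and> (\<lambda>N. \<theta> * (w_vec \<rho> T \<theta> N \<bullet> w_vec \<rho> T \<theta> N)) \<longlonglongrightarrow> 1 / (4 * (\<rho>*T + 1)^2)"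
  using v_vec_dot_tendsto[OF assms] w_vec_dot_tendsto[OF assms] ..

end
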